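(* Let $\lambda\in(0,1)$ and let $p:[1,\infty)\to(0,\infty)$ be continuously differentiable with $p(t)$ non-increasing and tending to $0$, and $p(t)\ln t$ non-decreasing and tending to $+\infty$ as $t\to\infty$. Put $s_j=p(j)\ln j$. Then $$\sum_{j=1}^N\lambda^{s_j}\ \sim\ N^{1+p(N)\ln\lambda}\qquad\text{as }N\to\infty,$$ i.e. the ratio of the two sides tends to $1$. *)

theory Defs
  imports "HOL-Analysis.Analysis"
begin

end

theory Submission
  imports Defs "HOL-Real_Asymp.Real_Asymp"
begin

text \<open>
  With \<open>\<phi> = -p ln \<lambda>\<close> the terms are \<open>j powr -\<phi> j\<close> and the denominator is
  \<open>N powr (1 - \<phi> N) = N * N powr -\<phi> N\<close>. Since \<open>\<phi> t * ln t\<close> increases, every term is at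
  least the last one, which gives the lower bound. For the upper bound fix \<open>0 < b < 1\<close>: once
  \<open>\<phi> j \<le> b\<close>, the decrease of \<open>\<phi>\<close> gives \<open>j powr -\<phi> j \<le> N powr -\<phi> N * (N / j) powr b\<close>, and
  concavity of \<open>t powr (1 - b)\<close> gives \<open>\<Sum>j\<le>N. (N / j) powr b \<le> N / (1 - b)\<close>. The finitely many
  earlier terms are at most 1 each and are negligible because \<open>N powr (1 - \<phi> N) \<rightarrow> \<infinity>\<close>.
  Letting \<open>b \<rightarrow> 0\<close> squeezes the ratio to 1.
\<close>

lemma mult_powr_le_powr_diff:
  fixes c x :: real
  assumes c: "0 < c" "c \<le> 1" and x: "x \<ge> 1"
  shows "c * x powr (c - 1) \<le> x powr c - (x - 1) powr c"
proof (cases "x = 1")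
  case True
  then show ?thesis using c by simp
next
  case False
  with x have x1: "x > 1" by simp
  have "((x - 1) / x) powr c * 1 powr (1 - c) \<le> c * ((x - 1) / x) + (1 - c) * 1"
    by (rule Youngs_inequality_0) (use c x1 in auto)
  then have Young: "((x - 1) / x) powr c \<le> 1 - c / x"
    using x1 by (simp add: field_simps)
  have "(x - 1) powr c = x powr c * ((x - 1) / x) powr c"
    using x1 by (simp add: powr_divide)
  also have "\<dots> \<le> x powr c * (1 - c / x)"
    using Young by (intro mult_left_mono) auto
  also have "\<dots> = x powr c - c * x powr (c - 1)"
    using x1 by (simp add: powr_diff field_simps)
  finally show ?thesis by simp
qed

lemma sum_powr_le:
  fixes c :: real
  assumes "0 < c" "c \<le> 1"
  shows "(\<Sum>j=1..N. real j powr (c - 1)) \<le> real N powr c / c"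
proof (induction N)
  case 0
  then show ?case by simp
next
  case (Suc N)
  have "real (Suc N) powr (c - 1) \<le> (real (Suc N) powr c - real N powr c) / c"
    using mult_powr_le_powr_diff[OF assms, of "real (Suc N)"] assms
    by (simp add: pos_le_divide_eq mult.commute)
  with Suc show ?case by (simp add: diff_divide_distrib)
qed

lemma sum_divide_powr_le:
  fixes b :: real
  assumes "0 < b" "b < 1" "N \<ge> 1"
  shows "(\<Sum>j=1..N. (real N / real j) powr b) \<le> real N / (1 - b)"
proof -
  have "(\<Sum>j=1..N. (real N / real j) powr b)
      = real N powr b * (\<Sum>j=1..N. real j powr ((1 - b) - 1))"
    by (simp add: sum_distrib_left powr_divide powr_minus_divide)
  also have "\<dots> \<le> real N powr b * (real N powr (1 - b) / (1 - b))"
    using sum_powr_le[of "1 - b" N] assms by (intro mult_left_mono) auto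
  also have "\<dots> = real N / (1 - b)"
    using assms by (simp add: powr_add [symmetric])
  finally show ?thesis .
qed

lemma powr_neg_eq_exp: "j \<ge> 1 \<Longrightarrow> real j powr - a = exp (- (a * ln (real j)))"
  by (simp add: powr_def mult.commute)

lemma sum_powr_neg_ge:
  fixes \<phi> :: "nat \<Rightarrow> real"
  assumes nondec: "\<And>m n. 1 \<le> m \<Longrightarrow> m \<le> n \<Longrightarrow> \<phi> m * ln m \<le> \<phi> n * ln n"
    and "N \<ge> 1"
  shows "real N powr (1 - \<phi> N) \<le> (\<Sum>j=1..N. real j powr - \<phi> j)"
proof -
  have "real N powr (1 - \<phi> N) = (\<Sum>j=1..N. real N powr - \<phi> N)"
    using \<open>N \<ge> 1\<close> by (simp add: powr_diff powr_minus_divide)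
  also have "\<dots> \<le> (\<Sum>j=1..N. real j powr - \<phi> j)"
    using nondec by (intro sum_mono) (simp add: powr_neg_eq_exp)
  finally show ?thesis .
qed

lemma sum_powr_neg_le:
  fixes \<phi> :: "nat \<Rightarrow> real"
  assumes noninc: "\<And>m n. 1 \<le> m \<Longrightarrow> m \<le> n \<Longrightarrow> \<phi> n \<le> \<phi> m"
    and nondec: "\<And>m n. 1 \<le> m \<Longrightarrow> m \<le> n \<Longrightarrow> \<phi> m * ln m \<le> \<phi> n * ln n"
    and b: "0 < b" "b < 1" and small: "\<And>j. j \<ge> J \<Longrightarrow> \<phi> j \<le> b"
    and N: "N \<ge> 1"
  shows "(\<Sum>j=1..N. real j powr - \<phi> j) \<le> real J + real N powr (1 - \<phi> N) / (1 - b)"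
proof -
  define tail where "tail j = real N powr - \<phi> N * (real N / real j) powr b" for j
  have term_le: "real j powr - \<phi> j \<le> (if j < J then 1 else 0) + tail j"
    if j: "j \<in> {1..N}" for j
  proof (cases "j < J")
    case True
    have "\<phi> j * ln j \<ge> 0"
      using nondec[of 1 j] j by simp
    then have "real j powr - \<phi> j \<le> 1"
      using j by (simp add: powr_neg_eq_exp)
    moreover have "tail j \<ge> 0" by (simp add: tail_def)
    ultimately show ?thesis using True by simp
  next
    case False
    have lnjN: "ln j \<le> ln N" using j by simp
    have "\<phi> N * ln N - \<phi> j * ln j \<le> \<phi> j * (ln N - ln j)"
      using noninc[of j N] j by (simp add: algebra_simps mult_right_mono)
    also have "\<dots> \<le> b * (ln N - ln j)"
      using small[of j] False lnjN by (intro mult_right_mono) auto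
    finally have "- (\<phi> j * ln j) \<le> - (\<phi> N * ln N) + b * ln (real N / real j)"
      using j by (simp add: ln_div)
    then have "real j powr - \<phi> j \<le> tail j"
      using j by (simp add: tail_def powr_neg_eq_exp powr_def exp_add [symmetric] mult.commute)
    then show ?thesis using False by simp
  qed
  have initial: "(\<Sum>j=1..M. if j < J then 1 else 0 :: real) \<le> real J" for M
    by (induction M) auto
  have "(\<Sum>j=1..N. real j powr - \<phi> j) \<le> (\<Sum>j=1..N. (if j < J then 1 else 0) + tail j)"
    by (intro sum_mono term_le)
  also have "\<dots> = (\<Sum>j=1..N. if j < J then 1 else 0) + real N powr - \<phi> N * (\<Sum>j=1..N. (real N / real j) powr b)"
    by (simp add: tail_def sum.distrib sum_distrib_left)
  also have "\<dots> \<le> real J + real N powr - \<phi> N * (real N / (1 - b))"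
    using initial sum_divide_powr_le[OF b N] by (intro add_mono mult_left_mono) auto
  also have "\<dots> = real J + real N powr (1 - \<phi> N) / (1 - b)"
    using N by (simp add: powr_diff powr_minus_divide)
  finally show ?thesis .
qed

lemma filterlim_powr_one_minus_at_top:
  fixes \<phi> :: "nat \<Rightarrow> real"
  assumes "\<phi> \<longlonglongrightarrow> 0"
  shows "filterlim (\<lambda>N. real N powr (1 - \<phi> N)) at_top sequentially"
proof (rule filterlim_at_top_mono)
  show "filterlim (\<lambda>N::nat. real N powr (1/2)) at_top sequentially"
    by real_asymp
  have "\<forall>\<^sub>F N in sequentially. \<phi> N < 1/2"
    by (rule order_tendstoD(2)[OF assms]) simp
  then show "\<forall>\<^sub>F N in sequentially. real N powr (1/2) \<le> real N powr (1 - \<phi> N)"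
    using eventually_ge_at_top[of 1] by eventually_elim (auto intro: powr_mono)
qed

theorem sum_powr_neg_asymp:
  fixes \<phi> :: "nat \<Rightarrow> real"
  assumes noninc: "\<And>m n. 1 \<le> m \<Longrightarrow> m \<le> n \<Longrightarrow> \<phi> n \<le> \<phi> m"
    and nondec: "\<And>m n. 1 \<le> m \<Longrightarrow> m \<le> n \<Longrightarrow> \<phi> m * ln m \<le> \<phi> n * ln n"
    and lim: "\<phi> \<longlonglongrightarrow> 0"
  shows "(\<lambda>N. (\<Sum>j=1..N. real j powr - \<phi> j) / real N powr (1 - \<phi> N)) \<longlonglongrightarrow> 1"
proof (rule tendstoI)
  fix r :: real
  assume r: "r > 0"
  define S where "S N = (\<Sum>j=1..N. real j powr - \<phi> j)" for N
  define D where "D N = real N powr (1 - \<phi> N)" for N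
  define b where "b = r / (2 + r)"
  have b: "0 < b" "b < 1" using r by (auto simp: b_def)
  have b_inv: "1 / (1 - b) = 1 + r/2"
    using r by (simp add: b_def field_simps)
  obtain J where small: "\<And>j. j \<ge> J \<Longrightarrow> \<phi> j \<le> b"
    using order_tendstoD(2)[OF lim, of b] b by (force simp: eventually_sequentially)
  have "(\<lambda>N. real J / D N) \<longlonglongrightarrow> 0"
    unfolding D_def using lim
    by (intro tendsto_divide_0[OF tendsto_const] filterlim_at_top_imp_at_infinity
        filterlim_powr_one_minus_at_top)
  then have "\<forall>\<^sub>F N in sequentially. real J / D N < r/2"
    by (rule order_tendstoD(2)) (use r in simp)
  then show "\<forall>\<^sub>F N in sequentially. dist (S N / D N) 1 < r"
    using eventually_ge_at_top[of 1]
  proof eventually_elim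
    case (elim N)
    have D_pos: "D N > 0" using elim by (simp add: D_def)
    have lower: "1 \<le> S N / D N"
      using sum_powr_neg_ge[OF nondec \<open>N \<ge> 1\<close>] D_pos by (simp add: S_def D_def)
    have "S N \<le> real J + D N / (1 - b)"
      using sum_powr_neg_le[OF noninc nondec b small \<open>N \<ge> 1\<close>] by (simp add: S_def D_def)
    then have "S N / D N \<le> (real J + D N / (1 - b)) / D N"
      using D_pos by (simp add: divide_right_mono)
    also have "\<dots> = real J / D N + 1 / (1 - b)"
      using D_pos by (simp add: add_divide_distrib)
    finally have "S N / D N - 1 < r"
      using elim b_inv by linarith
    with lower show ?case by (simp add: dist_real_def)
  qed
qed

lemma powr_ln_commute: "0 < x \<Longrightarrow> 0 < y \<Longrightarrow> x powr (c * ln y) = y powr (c * ln x :: real)"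
  by (simp add: powr_def mult_ac)

theorem mainTheorem8:
  fixes l :: real and p p' :: "real \<Rightarrow> real"
  assumes l: "0 < l" "l < 1"
    and deriv: "\<And>t. t \<ge> 1 \<Longrightarrow> (p has_real_derivative p' t) (at t within {1..})"
    and cont_deriv: "continuous_on {1..} p'"
    and pos: "\<And>t. t \<ge> 1 \<Longrightarrow> p t > 0"
    and noninc: "\<And>s t. 1 \<le> s \<Longrightarrow> s \<le> t \<Longrightarrow> p t \<le> p s"
    and lim0: "(p \<longlongrightarrow> 0) at_top"
    and nondec: "\<And>s t. 1 \<le> s \<Longrightarrow> s \<le> t \<Longrightarrow> p s * ln s \<le> p t * ln t"
    and liminf: "filterlim (\<lambda>t. p t * ln t) at_top at_top"
  shows "(\<lambda>N::nat. (\<Sum>j=1..N. l powr (p (real j) * ln (real j)))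
                    / (real N powr (1 + p (real N) * ln l))) \<longlonglongrightarrow> 1"
proof -
  define \<phi> where "\<phi> n = - ln l * p (real n)" for n :: nat
  have "- ln l > 0" using l by simp
  have "(\<lambda>N. (\<Sum>j=1..N. real j powr - \<phi> j) / real N powr (1 - \<phi> N)) \<longlonglongrightarrow> 1"
  proof (rule sum_powr_neg_asymp)
    show "\<phi> n \<le> \<phi> m" if "1 \<le> m" "m \<le> n" for m n
      using noninc[of m n] that \<open>- ln l > 0\<close> by (simp add: \<phi>_def)
    show "\<phi> m * ln m \<le> \<phi> n * ln n" if "1 \<le> m" "m \<le> n" for m n
      using nondec[of m n] that \<open>- ln l > 0\<close> by (simp add: \<phi>_def mult.assoc)
    show "\<phi> \<longlonglongrightarrow> 0"
      unfolding \<phi>_def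
      by (intro tendsto_mult_right_zero filterlim_compose[OF lim0 filterlim_real_sequentially])
  qed
  moreover have "(\<Sum>j=1..N. l powr (p (real j) * ln (real j))) = (\<Sum>j=1..N. real j powr - \<phi> j)" for N
    using l by (intro sum.cong refl) (subst powr_ln_commute, auto simp: \<phi>_def mult.commute)
  ultimately show ?thesis
    by (simp add: \<phi>_def mult.commute)
qed

end
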